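(* Let $P$ be a distribution on $\mathcal X\times\mathcal Y$ with every $\mathbf x\in\mathcal X\subseteq\mathbb R^d$ satisfying $\|\mathbf x\|\le1$ and $\mathcal Y=\{-1,+1\}$ or $[-1,1]$; let $(\mathbf x_i,y_i)_{i=1}^n$ be i.i.d. from $P$. Let $R>0$, $\mathscr W=\{\mathbf w:\|\mathbf w\|\le R\}$, $\ell:\mathbb R\to\mathbb R_+$ convex, $\alpha$-exp-concave on $|z|\le R$, $|\ell'|\le G$, $\mathcal L(\mathbf w)=\mathrm E[\ell(y\mathbf w^\top\mathbf x)]$, $\mathbf w_*\in\arg\min_{\mathscr W}\mathcal L$, $\mathbf H=\mathrm E[\mathbf x\mathbf x^\top]$, $\beta=\frac12\min(\alpha,1/(4GR))$, and suppose Assumption (II) holds with constant $\theta>0$. Let $\mathbf w_1,\dots,\mathbf w_n$ be the iterates of the algorithm in the context and $A=\sum_{i=1}^n\|\mathbf w_i-\mathbf w_*\|_{\mathbf H}^2$. If $A\le4R^2/n$, then \[ \sum_{i=1}^n\left(\mathcal L(\mathbf w_i)-\mathcal L(\mathbf w_* )\right)+\frac{\theta\beta}2\sum_{i=1}^n\|\mathbf w_i-\mathbf w_*\|_{\mathbf H}^2\le2RG. \]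
   Context: $\|\mathbf w\|_{\mathbf H}^2=\mathbf w^\top\mathbf H\mathbf w$. Assumption (II): $\mathrm E[(\ell'(y\mathbf w^\top\mathbf x))^2\mathbf x\mathbf x^\top]\succeq\theta\,\mathrm E[\mathbf x\mathbf x^\top]$ for all $\mathbf w\in\mathscr W$. Algorithm with inputs $\eta_1>0$, $a>0$: $\mathbf w_1=\mathbf 0$, $\mathbf M_0=a\mathbf I$; for $i=1,\dots,n$: $\mathbf M_i=\mathbf M_{i-1}+\mathbf x_i\mathbf x_i^\top$, $\mathbf Z_i=\mathbf M_i/i$, $\mathbf v_i=\ell'(y_i\mathbf w_i^\top\mathbf x_i)\mathbf x_i$, $\eta_i=\eta_1/i$, $\mathbf w_{i+1}=\arg\min_{\mathbf w\in\mathscr W}\eta_i\langle\mathbf w,\mathbf v_i\rangle+\frac12(\mathbf w-\mathbf w_i)^\top\mathbf Z_i(\mathbf w-\mathbf w_i)$. *)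

theory Defs
  imports "HOL-Probability.Probability"
begin

definition outer :: "real^'n \<Rightarrow> real^'n^'n" where
  "outer x = (\<chi> i j. x $ i * x $ j)"

definition exp_outer :: "((real^'n) \<times> real) measure \<Rightarrow> ((real^'n) \<times> real \<Rightarrow> real) \<Rightarrow> real^'n^'n" where
  "exp_outer P g = (\<chi> i j. \<integral>z. g z * (fst z $ i) * (fst z $ j) \<partial>P)"

definition loewner_le :: "real^'n^'n \<Rightarrow> real^'n^'n \<Rightarrow> bool" where
  "loewner_le A B \<longleftrightarrow> (\<forall>v. v \<bullet> (A *v v) \<le> v \<bullet> (B *v v))"

definition hnorm2 :: "real^'n^'n \<Rightarrow> real^'n \<Rightarrow> real" where
  "hnorm2 H w = w \<bullet> (H *v w)"

definition exp_loss :: "((real^'n) \<times> real) measure \<Rightarrow> (real \<Rightarrow> real) \<Rightarrow> real^'n \<Rightarrow> real" where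
  "exp_loss P l w = (\<integral>z. l (snd z * (w \<bullet> fst z)) \<partial>P)"

definition ons_obj :: "real \<Rightarrow> real \<Rightarrow> (real \<Rightarrow> real) \<Rightarrow> (nat \<Rightarrow> real^'n) \<Rightarrow> (nat \<Rightarrow> real)
    \<Rightarrow> nat \<Rightarrow> real^'n \<Rightarrow> real^'n \<Rightarrow> real" where
  "ons_obj eta1 a dl xs ys i wi u =
     (let M = a *\<^sub>R (mat 1 :: real^'n^'n) + (\<Sum>j\<in>{1..i}. outer (xs j));
          Zm = (1 / real i) *\<^sub>R M;
          v = dl (ys i * (wi \<bullet> xs i)) *\<^sub>R xs i;
          eta = eta1 / real i
      in eta * (u \<bullet> v) + 1/2 * ((u - wi) \<bullet> (Zm *v (u - wi))))"

end

theory Submission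
  imports Defs
begin

text \<open>Exp-concavity of the loss gives, pointwise in \<open>(x, y)\<close>, the second-order bound
  \<open>\<ell>(y w\<^sup>T x) - \<ell>(y w\<^sub>*\<^sup>T x) + beta/2 \<ell>'(y w\<^sup>T x)\<^sup>2 ((w - w\<^sub>*)\<^sup>T x)\<^sup>2 \<le> G \<bar>(w - w\<^sub>*)\<^sup>T x\<bar>\<close>.
  Taking expectations, Assumption (II) bounds the curvature term below by \<open>theta \<parallel>w - w\<^sub>*\<parallel>\<^sub>H\<^sup>2\<close> and
  Jensen bounds \<open>E\<bar>(w - w\<^sub>*)\<^sup>T x\<bar>\<close> by \<open>\<parallel>w - w\<^sub>*\<parallel>\<^sub>H\<close>. Summing over the iterates, Cauchy-Schwarz gives
  \<open>\<Sum> \<parallel>w\<^sub>i - w\<^sub>*\<parallel>\<^sub>H \<le> sqrt (n A) \<le> 2R\<close>.\<close>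

lemma ln_one_minus_le:
  fixes t :: real
  assumes "0 \<le> t" "t < 1"
  shows "ln (1 - t) \<le> - t - t\<^sup>2 / 2"
proof -
  have "(\<lambda>s. - s - s\<^sup>2/2 - ln (1 - s)) 0 \<le> (\<lambda>s. - s - s\<^sup>2/2 - ln (1 - s)) t"
  proof (rule DERIV_nonneg_imp_nondecreasing[OF assms(1)])
    fix x assume x: "0 \<le> x" "x \<le> t"
    then have "x < 1" using assms by auto
    then have "DERIV (\<lambda>s. - s - s\<^sup>2/2 - ln (1 - s)) x :> x\<^sup>2 / (1 - x)" and "x\<^sup>2 / (1 - x) \<ge> 0"
      by (auto intro!: derivative_eq_intros simp: field_simps power2_eq_square)
    then show "\<exists>y. DERIV (\<lambda>s. - s - s\<^sup>2/2 - ln (1 - s)) x :> y \<and> y \<ge> 0" by blast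
  qed
  then show ?thesis by simp
qed

lemma ln_one_plus_le:
  fixes s :: real
  assumes "0 \<le> s"
  shows "ln (1 + s) \<le> s - s\<^sup>2 / (2 * (1 + s))"
proof -
  have "(\<lambda>s. s - s\<^sup>2 / (2 * (1 + s)) - ln (1 + s)) 0 \<le> (\<lambda>s. s - s\<^sup>2 / (2 * (1 + s)) - ln (1 + s)) s"
  proof (rule DERIV_nonneg_imp_nondecreasing[OF assms])
    fix x assume x: "0 \<le> x" "x \<le> s"
    have "DERIV (\<lambda>s. s - s\<^sup>2 / (2 * (1 + s)) - ln (1 + s)) x :>
       (1 - ((2 * x) * (2 * (1 + x)) - x\<^sup>2 * 2) / (2 * (1 + x))\<^sup>2 - 1 / (1 + x))"
      using x by (auto intro!: derivative_eq_intros simp: power2_eq_square)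
    moreover have "1 - ((2 * x) * (2 * (1 + x)) - x\<^sup>2 * 2) / (2 * (1 + x))\<^sup>2 - 1 / (1 + x)
        = x\<^sup>2 / (2 * (1 + x)\<^sup>2)"
      using x by (simp add: divide_simps power2_eq_square) (simp add: algebra_simps)
    ultimately show "\<exists>y. DERIV (\<lambda>s. s - s\<^sup>2 / (2 * (1 + s)) - ln (1 + s)) x :> y \<and> y \<ge> 0"
      by force
  qed
  then show ?thesis by simp
qed

lemma ln_one_minus_le_quadratic:
  fixes t k :: real
  assumes "t < 1" "0 \<le> k" "2 * k * (1 + \<bar>t\<bar>) \<le> 1"
  shows "ln (1 - t) \<le> - t - k * t\<^sup>2"
proof (cases "t \<ge> 0")
  case True
  have "k * 1 \<le> k * (1 + \<bar>t\<bar>)" using assms(2) by (intro mult_left_mono) auto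
  then have "k \<le> 1/2" using assms(3) by linarith
  then have "(2 * k) * t\<^sup>2 \<le> 1 * t\<^sup>2" by (intro mult_right_mono) auto
  then have "k * t\<^sup>2 \<le> t\<^sup>2 / 2" by simp
  then show ?thesis using ln_one_minus_le[OF True assms(1)] by linarith
next
  case False
  then have s: "0 \<le> - t" "\<bar>t\<bar> = - t" by auto
  have "k \<le> 1 / (2 * (1 - t))" using assms(3) s by (simp add: field_simps)
  then have "k * t\<^sup>2 \<le> 1 / (2 * (1 - t)) * t\<^sup>2" by (rule mult_right_mono) simp
  then show ?thesis using ln_one_plus_le[OF s(1)] by simp
qed

lemma concave_on_le_tangent:
  fixes h :: "real \<Rightarrow> real"
  assumes conc: "concave_on {p..q} h" and c: "c \<in> {p..q}" and x: "x \<in> {p..q}"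
    and deriv: "(h has_real_derivative h') (at c)"
  shows "h x \<le> h c + h' * (x - c)"
proof -
  define g where "g t = h (c + t * (x - c))" for t
  have "((\<lambda>t. c + t * (x - c)) has_real_derivative (x - c)) (at 0)"
    by (auto intro!: derivative_eq_intros)
  from DERIV_chain2[OF _ this, of h h'] deriv
  have "(g has_real_derivative h' * (x - c)) (at 0)" by (simp add: g_def[abs_def] mult.commute)
  then have "((\<lambda>t. (g t - g 0) / t) \<longlongrightarrow> h' * (x - c)) (at_right 0)"
    unfolding has_field_derivative_iff by (auto intro: tendsto_mono[OF at_le])
  moreover have "\<forall>\<^sub>F t in at_right 0. h x - h c \<le> (g t - g 0) / t"
    using eventually_at_right_real[OF zero_less_one]
  proof eventually_elim
    case (elim t)
    have "(1 - t) * h c + t * h x \<le> h ((1 - t) *\<^sub>R c + t *\<^sub>R x)"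
      using concave_onD[OF conc, of t c x] elim c x by auto
    also have "(1 - t) *\<^sub>R c + t *\<^sub>R x = c + t * (x - c)" by (simp add: algebra_simps)
    finally have "t * (h x - h c) \<le> g t - g 0" by (simp add: g_def algebra_simps)
    then show ?case using elim by (simp add: pos_le_divide_eq mult.commute)
  qed
  ultimately have "h x - h c \<le> h' * (x - c)"
    by (rule tendsto_lowerbound) simp
  then show ?thesis by simp
qed

text \<open>The second-order lower bound of Hazan, Agarwal and Kale for exp-concave functions; the hypothesis
  on \<open>beta\<close> holds for \<open>beta = 1/2 min alpha (1/(4GD))\<close> when \<open>\<bar>g (b - a)\<bar> \<le> GD\<close>.\<close>
lemma exp_concave_quadratic_lower_bound:
  fixes l :: "real \<Rightarrow> real"
  assumes conc: "concave_on {p..q} (\<lambda>z. exp (- alpha * l z))" and alpha: "alpha > 0"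
    and a: "a \<in> {p..q}" and b: "b \<in> {p..q}"
    and deriv: "(l has_real_derivative g) (at a)"
    and beta: "0 \<le> beta" "beta / alpha + beta * \<bar>g * (b - a)\<bar> \<le> 1"
  shows "l a + g * (b - a) + beta / 2 * (g * (b - a))\<^sup>2 \<le> l b"
proof -
  define t where "t = alpha * (g * (b - a))"
  define k where "k = beta / (2 * alpha)"
  have "((\<lambda>z. exp (- alpha * l z)) has_real_derivative exp (- alpha * l a) * (- alpha * g)) (at a)"
    by (auto intro!: derivative_eq_intros deriv)
  from concave_on_le_tangent[OF conc a b this]
  have tangent: "exp (- alpha * l b) \<le> exp (- alpha * l a) * (1 - t)"
    by (simp add: t_def algebra_simps)
  then have t1: "0 < 1 - t" by (smt (verit) exp_gt_zero mult_nonneg_nonpos)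
  have "- alpha * l b \<le> ln (exp (- alpha * l a) * (1 - t))"
    using tangent t1 by (metis exp_gt_zero exp_le_cancel_iff exp_ln mult_pos_pos)
  also have "\<dots> = - alpha * l a + ln (1 - t)" using t1 by (simp add: ln_mult)
  finally have "- alpha * l b \<le> - alpha * l a + ln (1 - t)" .
  moreover have "ln (1 - t) \<le> - t - k * t\<^sup>2"
  proof (rule ln_one_minus_le_quadratic)
    show "0 \<le> k" using alpha beta by (simp add: k_def)
    have "\<bar>t\<bar> = alpha * \<bar>g * (b - a)\<bar>" using alpha by (simp add: t_def abs_mult)
    then show "2 * k * (1 + \<bar>t\<bar>) \<le> 1"
      using alpha beta(2) by (simp add: k_def field_simps)
  qed (use t1 in simp)
  ultimately have "- alpha * l b \<le> - alpha * l a - t - k * t\<^sup>2" by linarith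
  also have "\<dots> = - alpha * (l a + g * (b - a) + beta / 2 * (g * (b - a))\<^sup>2)"
    using alpha by (simp add: t_def k_def field_simps power2_eq_square)
  finally have "alpha * (l a + g * (b - a) + beta / 2 * (g * (b - a))\<^sup>2) \<le> alpha * l b" by simp
  then show ?thesis using alpha by simp
qed

text \<open>Applied with \<open>a = y w\<^sup>T x\<close>, \<open>c = (w - w\<^sub>*)\<^sup>T x\<close>, so that \<open>a - y c = y w\<^sub>*\<^sup>T x\<close>. Exp-concavity only
  yields the curvature term \<open>beta/2 (g c y)\<^sup>2\<close>; the missing \<open>beta/2 (g c)\<^sup>2 (1 - y\<^sup>2)\<close> is paid for
  by the slack \<open>(1 - \<bar>y\<bar>) \<bar>g c\<bar>\<close> in the linear term.\<close>
lemma exp_concave_margin_bound: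
  fixes l :: "real \<Rightarrow> real"
  assumes conc: "concave_on {-R..R} (\<lambda>z. exp (- alpha * l z))" and alpha: "alpha > 0"
    and deriv: "(l has_real_derivative g) (at a)"
    and a: "\<bar>a\<bar> \<le> R" and b: "\<bar>a - y * c\<bar> \<le> R" and y: "\<bar>y\<bar> \<le> 1"
    and beta: "0 \<le> beta" "beta \<le> alpha / 2" "beta * \<bar>g * c\<bar> \<le> 1 / 4"
  shows "l a - l (a - y * c) + beta / 2 * (g * c)\<^sup>2 \<le> \<bar>g * c\<bar>"
proof -
  define p where "p = \<bar>g * c\<bar>"
  have "\<bar>g * (a - y * c - a)\<bar> = \<bar>y\<bar> * p" by (simp add: p_def abs_mult)
  also have "\<dots> \<le> p" using y by (simp add: p_def mult_left_le_one_le)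
  finally have "beta * \<bar>g * (a - y * c - a)\<bar> \<le> 1 / 4"
    using beta by (smt (verit) p_def mult_left_mono)
  moreover have "beta / alpha \<le> 1 / 2" using alpha beta by (simp add: divide_simps)
  ultimately have "l a + g * (a - y * c - a) + beta / 2 * (g * (a - y * c - a))\<^sup>2 \<le> l (a - y * c)"
    using a b by (intro exp_concave_quadratic_lower_bound[OF conc alpha _ _ deriv beta(1)]) auto
  moreover have "g * (a - y * c - a) = - (g * y * c)" by simp
  moreover have "beta / 2 * (g * (a - y * c - a))\<^sup>2 = beta / 2 * (g * c)\<^sup>2 * y\<^sup>2"
    by (simp add: power2_eq_square)
  moreover have "beta / 2 * (g * c)\<^sup>2 * (1 - y\<^sup>2) = beta / 2 * (g * c)\<^sup>2 - beta / 2 * (g * c)\<^sup>2 * y\<^sup>2"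
    by (simp add: right_diff_distrib)
  ultimately have "l a - l (a - y * c) + beta / 2 * (g * c)\<^sup>2 \<le> g * y * c + beta / 2 * (g * c)\<^sup>2 * (1 - y\<^sup>2)"
    by linarith
  also have "\<dots> \<le> p * \<bar>y\<bar> + p / 8 * (1 - y\<^sup>2)"
  proof (rule add_mono)
    show "g * y * c \<le> p * \<bar>y\<bar>" by (simp add: p_def abs_mult) (metis abs_ge_self abs_mult mult.commute mult.left_commute)
    have "beta * (g * c)\<^sup>2 = beta * p * p" by (simp add: p_def power2_eq_square abs_mult_self_eq)
    also have "\<dots> \<le> 1 / 4 * p" using beta(3) by (intro mult_right_mono) (auto simp: p_def)
    finally show "beta / 2 * (g * c)\<^sup>2 * (1 - y\<^sup>2) \<le> p / 8 * (1 - y\<^sup>2)"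
      using y by (intro mult_right_mono) (auto simp: abs_square_le_1)
  qed
  also have "\<dots> \<le> p"
  proof -
    have "0 \<le> p * ((1 - \<bar>y\<bar>) * (7 - \<bar>y\<bar>))" using y by (simp add: p_def)
    moreover have "y\<^sup>2 = \<bar>y\<bar> * \<bar>y\<bar>" by (simp add: power2_eq_square abs_mult_self_eq)
    ultimately show ?thesis by (simp add: algebra_simps field_simps)
  qed
  finally show ?thesis by (simp add: p_def)
qed

lemma abs_inner_le_norm_of_norm_le_one:
  fixes w x :: "'a::real_inner"
  assumes "norm x \<le> 1"
  shows "\<bar>w \<bullet> x\<bar> \<le> norm w"
  using Cauchy_Schwarz_ineq2[of w x] mult_left_mono[OF assms norm_ge_zero[of w]] by simp

lemma margin_loss_pointwise_bound:
  fixes l dl :: "real \<Rightarrow> real" and x w ws :: "'a::real_inner"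
  assumes conc: "concave_on {-R..R} (\<lambda>z. exp (- alpha * l z))" and alpha: "alpha > 0"
    and deriv: "\<forall>z. (l has_real_derivative dl z) (at z)" and G: "\<forall>z. \<bar>dl z\<bar> \<le> G"
    and beta: "0 \<le> beta" "beta \<le> alpha / 2" "8 * beta * G * R \<le> 1"
    and x: "norm x \<le> 1" and y: "\<bar>y\<bar> \<le> 1" and w: "norm w \<le> R" and ws: "norm ws \<le> R"
  shows "l (y * (w \<bullet> x)) - l (y * (ws \<bullet> x)) + beta / 2 * ((dl (y * (w \<bullet> x)))\<^sup>2 * ((w - ws) \<bullet> x)\<^sup>2)
         \<le> G * \<bar>(w - ws) \<bullet> x\<bar>"
proof -
  define a c where "a = y * (w \<bullet> x)" and "c = (w - ws) \<bullet> x"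
  have R_bound: "\<bar>y * (v \<bullet> x)\<bar> \<le> R" if "norm v \<le> R" for v
    using abs_inner_le_norm_of_norm_le_one[OF x, of v] y that
    by (simp add: abs_mult) (metis abs_ge_zero dual_order.trans mult_left_le_one_le)
  have b: "a - y * c = y * (ws \<bullet> x)" by (simp add: a_def c_def inner_diff_left algebra_simps)
  have gc: "\<bar>dl a * c\<bar> \<le> G * (2 * R)"
  proof -
    have "\<bar>c\<bar> \<le> norm (w - ws)" unfolding c_def by (rule abs_inner_le_norm_of_norm_le_one[OF x])
    also have "\<dots> \<le> 2 * R" using norm_triangle_ineq4[of w ws] w ws by linarith
    moreover have "\<bar>dl a\<bar> \<le> G" using G by simp
    ultimately show ?thesis unfolding abs_mult by (intro mult_mono) auto
  qed
  have "beta * \<bar>dl a * c\<bar> \<le> beta * (G * (2 * R))" using gc beta(1) by (rule mult_left_mono)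
  with beta(3) have "beta * \<bar>dl a * c\<bar> \<le> 1 / 4" by simp
  then have "l a - l (a - y * c) + beta / 2 * (dl a * c)\<^sup>2 \<le> \<bar>dl a * c\<bar>"
    using R_bound[OF w] R_bound[OF ws] b y
    by (intro exp_concave_margin_bound[OF conc alpha deriv[rule_format] _ _ _ beta(1,2)])
       (auto simp: a_def)
  also have "\<dots> \<le> G * \<bar>c\<bar>" using G by (simp add: abs_mult mult_right_mono)
  finally show ?thesis unfolding b by (simp add: a_def c_def power_mult_distrib)
qed

lemma integrable_bounded_borel:
  fixes f :: "'a::topological_space \<Rightarrow> real"
  assumes "finite_measure P" "sets P = sets borel"
    and "f \<in> borel_measurable borel" and "AE z in P. \<bar>f z\<bar> \<le> B"
  shows "integrable P f"
proof -
  interpret finite_measure P by fact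
  have "borel_measurable P = (borel_measurable borel :: ('a \<Rightarrow> real) set)"
    by (rule measurable_cong_sets[OF assms(2) refl])
  then have "f \<in> borel_measurable P" using assms(3) by simp
  then show ?thesis using assms(4) by (intro integrable_const_bound[of _ B]) auto
qed

lemma borel_measurable_derivative:
  fixes l dl :: "real \<Rightarrow> real"
  assumes deriv: "\<forall>z. (l has_real_derivative dl z) (at z)"
  shows "dl \<in> borel_measurable borel"
proof (rule borel_measurable_LIMSEQ_real)
  fix i :: nat
  have "continuous_on UNIV l"
    using deriv by (meson DERIV_isCont continuous_at_imp_continuous_on)
  then have [measurable]: "l \<in> borel_measurable borel" by (rule borel_measurable_continuous_onI)
  show "(\<lambda>x. (l (x + 1 / Suc i) - l x) * Suc i) \<in> borel_measurable borel" by measurable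
next
  fix x :: real
  have "filterlim (\<lambda>i::nat. 1 / real (Suc i)) (at 0) sequentially"
    using LIMSEQ_inverse_real_of_nat by (simp add: filterlim_at inverse_eq_divide)
  from filterlim_compose[OF deriv[rule_format, of x, unfolded DERIV_def] this]
  show "(\<lambda>i. (l (x + 1 / Suc i) - l x) * Suc i) \<longlonglongrightarrow> dl x" by simp
qed

lemma borel_measurable_inner_fst [measurable]:
  "(\<lambda>z::'a::euclidean_space \<times> real. v \<bullet> fst z) \<in> borel_measurable borel"
  by (intro borel_measurable_continuous_onI continuous_intros)

lemma borel_measurable_margin:
  fixes f :: "real \<Rightarrow> real"
  assumes "f \<in> borel_measurable borel"
  shows "(\<lambda>z::'a::euclidean_space \<times> real. f (snd z * (v \<bullet> fst z))) \<in> borel_measurable borel"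
proof (rule measurable_compose[OF _ assms])
  show "(\<lambda>z::'a \<times> real. snd z * (v \<bullet> fst z)) \<in> borel_measurable borel"
    by (intro borel_measurable_continuous_onI continuous_intros)
qed

lemma quadratic_form_exp_outer:
  fixes P :: "((real^'d) \<times> real) measure"
  assumes P: "finite_measure P" "sets P = sets borel"
    and supp: "AE z in P. norm (fst z) \<le> 1"
    and g: "g \<in> borel_measurable borel" "AE z in P. \<bar>g z\<bar> \<le> B"
  shows "v \<bullet> (exp_outer P g *v v) = (\<integral>z. g z * (v \<bullet> fst z)\<^sup>2 \<partial>P)"
proof -
  define f where "f i j z = v $ i * v $ j * (g z * fst z $ i * fst z $ j)" for i j z
  have [measurable]: "(\<lambda>z. fst z $ i) \<in> borel_measurable borel" for i :: 'd
    by (intro borel_measurable_continuous_onI continuous_intros)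
  have int: "integrable P (f i j)" for i j
  proof (rule integrable_bounded_borel[OF P, where B = "\<bar>v $ i\<bar> * \<bar>v $ j\<bar> * B"])
    show "f i j \<in> borel_measurable borel" unfolding f_def using g(1) by measurable
    show "AE z in P. \<bar>f i j z\<bar> \<le> \<bar>v $ i\<bar> * \<bar>v $ j\<bar> * B"
      using supp g(2)
    proof eventually_elim
      case (elim z)
      have "\<bar>fst z $ i\<bar> * \<bar>fst z $ j\<bar> \<le> 1"
        using component_le_norm_cart[of "fst z"] elim by (intro mult_le_one) (auto intro: order_trans)
      then have "\<bar>g z * fst z $ i * fst z $ j\<bar> \<le> B"
        using elim mult_mono[of "\<bar>g z\<bar>" B "\<bar>fst z $ i\<bar> * \<bar>fst z $ j\<bar>" 1]
        by (simp add: abs_mult mult.assoc)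
      then show ?case by (simp add: f_def abs_mult mult_left_mono)
    qed
  qed
  have pointwise: "(\<Sum>i\<in>UNIV. \<Sum>j\<in>UNIV. f i j z) = g z * (v \<bullet> fst z)\<^sup>2" for z
    by (simp add: f_def inner_vec_def power2_eq_square sum_product sum_distrib_left algebra_simps)
  have "v \<bullet> (exp_outer P g *v v)
      = (\<Sum>i\<in>UNIV. \<Sum>j\<in>UNIV. v $ i * v $ j * (\<integral>z. g z * fst z $ i * fst z $ j \<partial>P))"
    by (simp add: exp_outer_def inner_vec_def matrix_vector_mult_def sum_distrib_left
        mult.assoc mult.left_commute mult.commute)
  also have "\<dots> = (\<Sum>i\<in>UNIV. \<Sum>j\<in>UNIV. \<integral>z. f i j z \<partial>P)"
    by (simp only: f_def integral_mult_right_zero)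
  also have "\<dots> = (\<integral>z. (\<Sum>i\<in>UNIV. \<Sum>j\<in>UNIV. f i j z) \<partial>P)"
    using int by (simp add: Bochner_Integration.integral_sum Bochner_Integration.integrable_sum)
  finally show ?thesis by (simp only: pointwise)
qed

lemma hnorm2_exp_outer_one:
  fixes P :: "((real^'d) \<times> real) measure"
  assumes "finite_measure P" "sets P = sets borel" "AE z in P. norm (fst z) \<le> 1"
  shows "hnorm2 (exp_outer P (\<lambda>_. 1)) v = (\<integral>z. (v \<bullet> fst z)\<^sup>2 \<partial>P)"
  using quadratic_form_exp_outer[OF assms, of "\<lambda>_. 1" 1 v] by (simp add: hnorm2_def)

lemma (in prob_space) integral_le_sqrt_integral_square:
  assumes "integrable M f" "integrable M (\<lambda>x. (f x)\<^sup>2)"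
  shows "(\<integral>x. f x \<partial>M) \<le> sqrt (\<integral>x. (f x)\<^sup>2 \<partial>M)"
proof -
  have "(\<integral>x. f x \<partial>M)\<^sup>2 \<le> (\<integral>x. (f x)\<^sup>2 \<partial>M)"
    using variance_eq[OF assms] variance_positive[of f] by simp
  then show ?thesis using real_sqrt_le_mono by fastforce
qed

lemma integrable_margin_loss:
  fixes P :: "('a::euclidean_space \<times> real) measure" and l :: "real \<Rightarrow> real"
  assumes P: "finite_measure P" "sets P = sets borel"
    and supp: "AE z in P. norm (fst z) \<le> 1 \<and> \<bar>snd z\<bar> \<le> 1"
    and l: "continuous_on UNIV l" and v: "norm v \<le> R"
  shows "integrable P (\<lambda>z. l (snd z * (v \<bullet> fst z)))"
proof -
  obtain B where B: "\<forall>t\<in>{-R..R}. \<bar>l t\<bar> \<le> B"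
    using compact_imp_bounded[OF compact_continuous_image[OF continuous_on_subset[OF l]]]
    by (auto simp: bounded_iff)
  have "AE z in P. \<bar>l (snd z * (v \<bullet> fst z))\<bar> \<le> B"
    using supp
  proof eventually_elim
    case (elim z)
    then have "\<bar>snd z * (v \<bullet> fst z)\<bar> \<le> R"
      using abs_inner_le_norm_of_norm_le_one[of "fst z" v] v
      by (simp add: abs_mult) (metis abs_ge_zero dual_order.trans mult_left_le_one_le)
    then show ?case using B by (simp add: abs_le_iff)
  qed
  moreover have "(\<lambda>z::'a \<times> real. l (snd z * (v \<bullet> fst z))) \<in> borel_measurable borel"
    using l by (intro borel_measurable_margin borel_measurable_continuous_onI)
  ultimately show ?thesis by (intro integrable_bounded_borel[OF P])
qed

lemma integrable_weighted_inner_square: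
  fixes P :: "((real^'d) \<times> real) measure"
  assumes P: "finite_measure P" "sets P = sets borel"
    and supp: "AE z in P. norm (fst z) \<le> 1"
    and g: "g \<in> borel_measurable borel" "AE z in P. \<bar>g z\<bar> \<le> B"
  shows "integrable P (\<lambda>z. g z * (v \<bullet> fst z)\<^sup>2)"
proof (rule integrable_bounded_borel[OF P, where B = "B * (norm v)\<^sup>2"])
  show "AE z in P. \<bar>g z * (v \<bullet> fst z)\<^sup>2\<bar> \<le> B * (norm v)\<^sup>2"
    using supp g(2)
  proof eventually_elim
    case (elim z)
    then have "(v \<bullet> fst z)\<^sup>2 \<le> (norm v)\<^sup>2"
      using abs_inner_le_norm_of_norm_le_one by (metis abs_le_square_iff abs_norm_cancel)
    then show ?case using elim by (simp add: abs_mult mult_mono)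
  qed
qed (use g(1) in measurable)

lemma scaled_hnorm2_le_weighted_second_moment:
  fixes P :: "((real^'d) \<times> real) measure"
  assumes P: "finite_measure P" "sets P = sets borel"
    and supp: "AE z in P. norm (fst z) \<le> 1"
    and g: "g \<in> borel_measurable borel" "AE z in P. \<bar>g z\<bar> \<le> B"
    and le: "loewner_le (theta *\<^sub>R exp_outer P (\<lambda>_. 1)) (exp_outer P g)"
  shows "theta * hnorm2 (exp_outer P (\<lambda>_. 1)) v \<le> (\<integral>z. g z * (v \<bullet> fst z)\<^sup>2 \<partial>P)"
proof -
  have "theta * hnorm2 (exp_outer P (\<lambda>_. 1)) v = v \<bullet> ((theta *\<^sub>R exp_outer P (\<lambda>_. 1)) *v v)"
    by (simp add: scaleR_matrix_vector_assoc[symmetric] hnorm2_def)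
  also have "\<dots> \<le> v \<bullet> (exp_outer P g *v v)" using le unfolding loewner_le_def by blast
  also have "\<dots> = (\<integral>z. g z * (v \<bullet> fst z)\<^sup>2 \<partial>P)" by (rule quadratic_form_exp_outer[OF P supp g])
  finally show ?thesis .
qed

lemma integral_abs_inner_le_sqrt_hnorm2:
  fixes P :: "((real^'d) \<times> real) measure"
  assumes P: "prob_space P" "sets P = sets borel" and supp: "AE z in P. norm (fst z) \<le> 1"
  shows "(\<integral>z. \<bar>v \<bullet> fst z\<bar> \<partial>P) \<le> sqrt (hnorm2 (exp_outer P (\<lambda>_. 1)) v)"
proof -
  interpret prob_space P by (rule P(1))
  have bound: "AE z in P. \<bar>v \<bullet> fst z\<bar> \<le> norm v"
    using supp by eventually_elim (rule abs_inner_le_norm_of_norm_le_one)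
  then have sq_bound: "AE z in P. \<bar>\<bar>v \<bullet> fst z\<bar>\<^sup>2\<bar> \<le> (norm v)\<^sup>2"
    by eventually_elim (simp add: abs_le_square_iff[symmetric])
  have "(\<integral>z. \<bar>v \<bullet> fst z\<bar> \<partial>P) \<le> sqrt (\<integral>z. \<bar>v \<bullet> fst z\<bar>\<^sup>2 \<partial>P)"
    using bound sq_bound
    by (intro integral_le_sqrt_integral_square integrable_bounded_borel[OF finite_measure_axioms P(2)]) auto
  then show ?thesis using hnorm2_exp_outer_one[OF finite_measure_axioms P(2) supp] by simp
qed

lemma excess_risk_plus_curvature_le:
  fixes P :: "((real^'d) \<times> real) measure" and l dl :: "real \<Rightarrow> real"
  assumes P: "prob_space P" "sets P = sets borel"
    and supp: "AE z in P. norm (fst z) \<le> 1 \<and> \<bar>snd z\<bar> \<le> 1"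
    and conc: "concave_on {-R..R} (\<lambda>z. exp (- alpha * l z))" and alpha: "alpha > 0"
    and deriv: "\<forall>z. (l has_real_derivative dl z) (at z)" and G: "\<forall>z. \<bar>dl z\<bar> \<le> G"
    and beta: "0 \<le> beta" "beta \<le> alpha / 2" "8 * beta * G * R \<le> 1"
    and II: "loewner_le (theta *\<^sub>R exp_outer P (\<lambda>_. 1))
                        (exp_outer P (\<lambda>z. (dl (snd z * (w \<bullet> fst z)))\<^sup>2))"
    and w: "norm w \<le> R" and ws: "norm ws \<le> R"
  shows "exp_loss P l w - exp_loss P l ws + theta * beta / 2 * hnorm2 (exp_outer P (\<lambda>_. 1)) (w - ws)
         \<le> G * sqrt (hnorm2 (exp_outer P (\<lambda>_. 1)) (w - ws))"
proof -
  interpret prob_space P by (rule P(1))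
  note P' = finite_measure_axioms P(2)
  have suppx: "AE z in P. norm (fst z) \<le> 1" using supp by auto
  define d where "d = w - ws"
  define H where "H = exp_outer P (\<lambda>_. 1)"
  define q where "q z = (dl (snd z * (w \<bullet> fst z)))\<^sup>2 * (d \<bullet> fst z)\<^sup>2" for z
  have l_cont: "continuous_on UNIV l"
    using deriv by (meson DERIV_isCont continuous_at_imp_continuous_on)
  have loss_int: "integrable P (\<lambda>z. l (snd z * (v \<bullet> fst z)))" if "norm v \<le> R" for v
    using integrable_margin_loss[OF P' supp l_cont that] .
  have dl_sq_meas[measurable]: "(\<lambda>z::(real^'d) \<times> real. (dl (snd z * (w \<bullet> fst z)))\<^sup>2) \<in> borel_measurable borel"
    using borel_measurable_margin[OF borel_measurable_derivative[OF deriv]] by measurable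
  have G0: "0 \<le> G" using G by (meson abs_ge_zero order_trans)
  have dl_sq_bound: "AE z in P. \<bar>(dl (snd z * (w \<bullet> fst z)))\<^sup>2\<bar> \<le> G\<^sup>2"
    using G G0 by (intro AE_I2) (simp add: abs_le_square_iff[symmetric])
  have abs_int: "integrable P (\<lambda>z. \<bar>d \<bullet> fst z\<bar>)"
    using suppx abs_inner_le_norm_of_norm_le_one
    by (intro integrable_bounded_borel[OF P', where B = "norm d"]) (auto elim: eventually_mono)
  have q_int: "integrable P q"
    unfolding q_def by (rule integrable_weighted_inner_square[OF P' suppx dl_sq_meas dl_sq_bound])
  have "AE z in P. l (snd z * (w \<bullet> fst z)) - l (snd z * (ws \<bullet> fst z)) + beta / 2 * q z
      \<le> G * \<bar>d \<bullet> fst z\<bar>"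
    using supp
  proof eventually_elim
    case (elim z)
    then show ?case unfolding q_def d_def
      by (intro margin_loss_pointwise_bound[OF conc alpha deriv G beta _ _ w ws]) auto
  qed
  then have "(\<integral>z. l (snd z * (w \<bullet> fst z)) - l (snd z * (ws \<bullet> fst z)) + beta / 2 * q z \<partial>P)
      \<le> (\<integral>z. G * \<bar>d \<bullet> fst z\<bar> \<partial>P)"
    using loss_int[OF w] loss_int[OF ws] q_int abs_int by (intro integral_mono_AE) auto
  then have "exp_loss P l w - exp_loss P l ws + beta / 2 * (\<integral>z. q z \<partial>P)
      \<le> G * (\<integral>z. \<bar>d \<bullet> fst z\<bar> \<partial>P)"
    using loss_int[OF w] loss_int[OF ws] q_int by (simp add: exp_loss_def)
  moreover have "(\<integral>z. \<bar>d \<bullet> fst z\<bar> \<partial>P) \<le> sqrt (hnorm2 H d)"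
    unfolding H_def by (rule integral_abs_inner_le_sqrt_hnorm2[OF P suppx])
  moreover have curvature: "theta * hnorm2 H d \<le> (\<integral>z. q z \<partial>P)"
    unfolding H_def q_def by (rule scaled_hnorm2_le_weighted_second_moment[OF P' suppx dl_sq_meas dl_sq_bound II])
  then have "theta * beta / 2 * hnorm2 H d \<le> beta / 2 * (\<integral>z. q z \<partial>P)"
    using mult_left_mono[OF curvature, of "beta / 2"] beta(1) by (simp add: algebra_simps)
  ultimately have "exp_loss P l w - exp_loss P l ws + theta * beta / 2 * hnorm2 H d \<le> G * sqrt (hnorm2 H d)"
    using G0 by (smt (verit) mult_left_mono)
  then show ?thesis unfolding H_def d_def .
qed

lemma sum_le_of_le_sqrt:
  fixes L h :: "'a \<Rightarrow> real"
  assumes bound: "\<forall>i\<in>A. L i + c * h i \<le> G * sqrt (h i)" and h: "\<forall>i\<in>A. 0 \<le> h i"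
    and sum_h: "sum h A \<le> D\<^sup>2 / card A" and "0 \<le> G" "0 \<le> D"
  shows "sum L A + c * sum h A \<le> D * G"
proof -
  have sum_sqrt: "(\<Sum>i\<in>A. sqrt (h i)) \<le> D"
  proof (cases "card A = 0")
    case True
    then have "(\<Sum>i\<in>A. sqrt (h i)) = 0" by (auto simp: card_eq_0_iff)
    then show ?thesis using \<open>0 \<le> D\<close> by simp
  next
    case False
    have "(\<Sum>i\<in>A. sqrt (h i))\<^sup>2 \<le> (\<Sum>i\<in>A. (sqrt (h i))\<^sup>2) * card A"
      by (rule sum_squared_le_sum_of_squares)
    also have "\<dots> = sum h A * card A" using h by simp
    also have "\<dots> \<le> D\<^sup>2" using sum_h False by (simp add: field_simps)
    finally show ?thesis using \<open>0 \<le> D\<close> by (rule power2_le_imp_le)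
  qed
  have "sum L A + c * sum h A = (\<Sum>i\<in>A. L i + c * h i)" by (simp add: sum.distrib sum_distrib_left)
  also have "\<dots> \<le> G * (\<Sum>i\<in>A. sqrt (h i))" using bound by (simp add: sum_distrib_left sum_mono)
  also have "\<dots> \<le> G * D" using sum_sqrt \<open>0 \<le> G\<close> by (rule mult_left_mono)
  finally show ?thesis by (simp add: mult.commute)
qed

theorem lemma8:
  fixes P :: "((real^'d) \<times> real) measure"
    and M :: "'w measure"
    and S :: "nat \<Rightarrow> 'w \<Rightarrow> (real^'d) \<times> real"
    and n :: nat
    and Y :: "real set"
    and R alpha G theta eta1 a :: real
    and l dl :: "real \<Rightarrow> real"
    and wstar :: "real^'d"
    and w :: "nat \<Rightarrow> 'w \<Rightarrow> real^'d"
  assumes P: "prob_space P" "sets P = sets borel"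
    and Y: "Y = {-1, 1} \<or> Y = {-1..1}"
    and supp: "AE z in P. norm (fst z) \<le> 1 \<and> snd z \<in> Y"
    and M: "prob_space M"
    and indep: "prob_space.indep_vars M (\<lambda>_. borel) S {1..n}"
    and distr: "\<forall>i\<in>{1..n}. distr M borel (S i) = P"
    and R: "R > 0"
    and l_nonneg: "\<forall>z. l z \<ge> 0"
    and l_deriv: "\<forall>z. (l has_real_derivative dl z) (at z)"
    and l_convex: "convex_on UNIV l"
    and alpha: "alpha > 0"
    and l_expconc: "concave_on {-R..R} (\<lambda>z. exp (- alpha * l z))"
    and G: "G > 0" "\<forall>z. \<bar>dl z\<bar> \<le> G"
    and wstar: "norm wstar \<le> R" "\<forall>v. norm v \<le> R \<longrightarrow> exp_loss P l wstar \<le> exp_loss P l v"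
    and theta: "theta > 0"
    and assmII: "\<forall>v. norm v \<le> R \<longrightarrow>
                   loewner_le (theta *\<^sub>R exp_outer P (\<lambda>_. 1))
                              (exp_outer P (\<lambda>z. (dl (snd z * (v \<bullet> fst z)))\<^sup>2))"
    and eta1: "eta1 > 0" and a: "a > 0"
    and w1: "\<forall>\<omega>. w 1 \<omega> = 0"
    and wstep: "\<forall>\<omega>. \<forall>i\<in>{1..<n}.
        norm (w (Suc i) \<omega>) \<le> R \<and>
        (\<forall>u. norm u \<le> R \<longrightarrow>
           ons_obj eta1 a dl (\<lambda>j. fst (S j \<omega>)) (\<lambda>j. snd (S j \<omega>)) i (w i \<omega>) (w (Suc i) \<omega>)
           \<le> ons_obj eta1 a dl (\<lambda>j. fst (S j \<omega>)) (\<lambda>j. snd (S j \<omega>)) i (w i \<omega>) u)"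
  shows "AE \<omega> in M.
           (\<Sum>i=1..n. hnorm2 (exp_outer P (\<lambda>_. 1)) (w i \<omega> - wstar)) \<le> 4 * R\<^sup>2 / real n \<longrightarrow>
           (\<Sum>i=1..n. exp_loss P l (w i \<omega>) - exp_loss P l wstar)
             + theta * (1/2 * min alpha (1 / (4 * G * R))) / 2
               * (\<Sum>i=1..n. hnorm2 (exp_outer P (\<lambda>_. 1)) (w i \<omega> - wstar))
           \<le> 2 * R * G"
proof (intro AE_I2 impI)
  fix \<omega>
  define beta where "beta = 1/2 * min alpha (1 / (4 * G * R))"
  define h where "h i = hnorm2 (exp_outer P (\<lambda>_. 1)) (w i \<omega> - wstar)" for i
  assume A: "(\<Sum>i=1..n. hnorm2 (exp_outer P (\<lambda>_. 1)) (w i \<omega> - wstar)) \<le> 4 * R\<^sup>2 / real n"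
  have beta_bounds: "0 \<le> beta" "beta \<le> alpha / 2" "8 * beta * G * R \<le> 1"
    using alpha G R by (auto simp: beta_def min_def field_simps)
  have supp': "AE z in P. norm (fst z) \<le> 1 \<and> \<bar>snd z\<bar> \<le> 1"
    using supp by eventually_elim (use Y in auto)
  have w_bound: "norm (w i \<omega>) \<le> R" if "i \<in> {1..n}" for i
  proof (cases "i = 1")
    case False
    then have "i - 1 \<in> {1..<n}" "Suc (i - 1) = i" using that by auto
    then show ?thesis using wstep by metis
  qed (use w1 R in simp)
  have per_iterate: "exp_loss P l (w i \<omega>) - exp_loss P l wstar + theta * beta / 2 * h i \<le> G * sqrt (h i)"
    if "i \<in> {1..n}" for i
    unfolding h_def using assmII w_bound[OF that] wstar(1)
    by (intro excess_risk_plus_curvature_le[OF P supp' l_expconc alpha l_deriv G(2) beta_bounds]) auto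
  have "\<forall>i\<in>{1..n}. 0 \<le> h i"
    using hnorm2_exp_outer_one[OF prob_space.finite_measure[OF P(1)] P(2)] supp'
    by (simp add: h_def eventually_mono)
  moreover have "sum h {1..n} \<le> (2 * R)\<^sup>2 / real (card {1..n})"
    using A by (simp add: h_def power_mult_distrib)
  ultimately have "(\<Sum>i=1..n. exp_loss P l (w i \<omega>) - exp_loss P l wstar) + theta * beta / 2 * sum h {1..n}
      \<le> 2 * R * G"
    using per_iterate G R by (intro sum_le_of_le_sqrt) auto
  then show "(\<Sum>i=1..n. exp_loss P l (w i \<omega>) - exp_loss P l wstar)
      + theta * (1/2 * min alpha (1 / (4 * G * R))) / 2
        * (\<Sum>i=1..n. hnorm2 (exp_outer P (\<lambda>_. 1)) (w i \<omega> - wstar)) \<le> 2 * R * G"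
    by (simp add: h_def beta_def)
qed

end
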